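(* Let $f\colon X\to Y$ be a surjective morphism of non-degenerate cycle sets. Then there is a unique brace morphism $A(f)\colon A(X)\to A(Y)$ such that $A(f)\circ\sigma_X=\sigma_Y\circ f$, where $\sigma_X\colon X\to A(X)$ and $\sigma_Y\colon Y\to A(Y)$ are the canonical maps; moreover $A(f)$ is surjective.
   Context: A cycle set is a set $X$ with a binary operation $\cdot$ such that for every $x\in X$ the map $y\mapsto x\cdot y$ is a bijection of $X$, and $(x\cdot y)\cdot(x\cdot z)=(y\cdot x)\cdot(y\cdot z)$ for all $x,y,z$. It is non-degenerate if the map $x\mapsto x\cdot x$ is bijective. A morphism of cycle sets is a map $f$ with $f(x\cdot y)=f(x)\cdot f(y)$. A brace is an abelian group $(A,+)$ with a binary operation $\cdot$ making $A$ a cycle set and satisfying $a\cdot(b+c)=(a\cdot b)+(a\cdot c)$ and $(a+b)\cdot c=(a\cdot b)\cdot(a\cdot c)$; a brace morphism is an additive homomorphism preserving $\cdot$. For a non-degenerate cycle set $X$, $A_X$ denotes the unique brace structure on the free abelian group $\mathbb{Z}^{(X)}$ extending the operation of $X$. The socle of a brace $A$ is $\mathrm{Soc}(A)=\{a\in A: a\cdot b=b \text{ for all } b\in A\}$; it is an ideal, so $A/\mathrm{Soc}(A)$ is a brace. Set $A(X):=A_X/\mathrm{Soc}(A_X)$ and let $\sigma_X\colon X\to A(X)$ be the composite of the inclusion $X\hookrightarrow A_X$ with the quotient map. *)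

theory Defs
  imports Main
begin

definition cycle_set :: "'a set \<Rightarrow> ('a \<Rightarrow> 'a \<Rightarrow> 'a) \<Rightarrow> bool" where
  "cycle_set X op \<longleftrightarrow>
     (\<forall>x\<in>X. bij_betw (op x) X X) \<and>
     (\<forall>x\<in>X. \<forall>y\<in>X. \<forall>z\<in>X. op (op x y) (op x z) = op (op y x) (op y z))"

definition nondeg_cycle_set :: "'a set \<Rightarrow> ('a \<Rightarrow> 'a \<Rightarrow> 'a) \<Rightarrow> bool" where
  "nondeg_cycle_set X op \<longleftrightarrow> cycle_set X op \<and> bij_betw (\<lambda>x. op x x) X X"

definition cycle_set_hom ::
  "'a set \<Rightarrow> ('a \<Rightarrow> 'a \<Rightarrow> 'a) \<Rightarrow> 'b set \<Rightarrow> ('b \<Rightarrow> 'b \<Rightarrow> 'b) \<Rightarrow> ('a \<Rightarrow> 'b) \<Rightarrow> bool" where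
  "cycle_set_hom X op Y op' f \<longleftrightarrow>
     (\<forall>x\<in>X. f x \<in> Y) \<and> (\<forall>x\<in>X. \<forall>y\<in>X. f (op x y) = op' (f x) (f y))"

section \<open>Braces (given by carrier, addition, and the cycle-set operation)\<close>

definition abelian_group_on :: "'a set \<Rightarrow> ('a \<Rightarrow> 'a \<Rightarrow> 'a) \<Rightarrow> bool" where
  "abelian_group_on A pl \<longleftrightarrow>
     (\<forall>a\<in>A. \<forall>b\<in>A. pl a b \<in> A) \<and>
     (\<forall>a\<in>A. \<forall>b\<in>A. \<forall>c\<in>A. pl (pl a b) c = pl a (pl b c)) \<and>
     (\<forall>a\<in>A. \<forall>b\<in>A. pl a b = pl b a) \<and>
     (\<exists>z\<in>A. (\<forall>a\<in>A. pl z a = a) \<and> (\<forall>a\<in>A. \<exists>b\<in>A. pl a b = z))"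

definition brace :: "'a set \<Rightarrow> ('a \<Rightarrow> 'a \<Rightarrow> 'a) \<Rightarrow> ('a \<Rightarrow> 'a \<Rightarrow> 'a) \<Rightarrow> bool" where
  "brace A pl op \<longleftrightarrow>
     abelian_group_on A pl \<and> cycle_set A op \<and>
     (\<forall>a\<in>A. \<forall>b\<in>A. \<forall>c\<in>A. op a (pl b c) = pl (op a b) (op a c)) \<and>
     (\<forall>a\<in>A. \<forall>b\<in>A. \<forall>c\<in>A. op (pl a b) c = op (op a b) (op a c))"

definition brace_hom ::
  "'a set \<Rightarrow> ('a \<Rightarrow> 'a \<Rightarrow> 'a) \<Rightarrow> ('a \<Rightarrow> 'a \<Rightarrow> 'a) \<Rightarrow>
   'b set \<Rightarrow> ('b \<Rightarrow> 'b \<Rightarrow> 'b) \<Rightarrow> ('b \<Rightarrow> 'b \<Rightarrow> 'b) \<Rightarrow> ('a \<Rightarrow> 'b) \<Rightarrow> bool" where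
  "brace_hom A pl op B pl' op' h \<longleftrightarrow>
     (\<forall>a\<in>A. h a \<in> B) \<and>
     (\<forall>a\<in>A. \<forall>b\<in>A. h (pl a b) = pl' (h a) (h b)) \<and>
     (\<forall>a\<in>A. \<forall>b\<in>A. h (op a b) = op' (h a) (h b))"

definition socle :: "'a set \<Rightarrow> ('a \<Rightarrow> 'a \<Rightarrow> 'a) \<Rightarrow> 'a set" where
  "socle A op = {a\<in>A. \<forall>b\<in>A. op a b = b}"

definition coset :: "('a \<Rightarrow> 'a \<Rightarrow> 'a) \<Rightarrow> 'a set \<Rightarrow> 'a \<Rightarrow> 'a set" where
  "coset pl I a = (\<lambda>s. pl a s) ` I"

definition quot_carrier :: "'a set \<Rightarrow> ('a \<Rightarrow> 'a \<Rightarrow> 'a) \<Rightarrow> 'a set \<Rightarrow> 'a set set" where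
  "quot_carrier A pl I = coset pl I ` A"

definition quot_op :: "('a \<Rightarrow> 'a \<Rightarrow> 'a) \<Rightarrow> 'a set \<Rightarrow> ('a \<Rightarrow> 'a \<Rightarrow> 'a) \<Rightarrow> 'a set \<Rightarrow> 'a set \<Rightarrow> 'a set" where
  "quot_op pl I f C D = coset pl I (f (SOME a. a \<in> C) (SOME b. b \<in> D))"

definition free_ab :: "'a set \<Rightarrow> ('a \<Rightarrow> int) set" where
  "free_ab X = {v. finite {x. v x \<noteq> 0} \<and> {x. v x \<noteq> 0} \<subseteq> X}"

definition fplus :: "('a \<Rightarrow> int) \<Rightarrow> ('a \<Rightarrow> int) \<Rightarrow> ('a \<Rightarrow> int)" where
  "fplus v w = (\<lambda>x. v x + w x)"

definition basis :: "'a \<Rightarrow> ('a \<Rightarrow> int)" where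
  "basis x = (\<lambda>y. if y = x then 1 else 0)"

text \<open>The operation of A_X: the unique brace operation on Z^(X) extending that of X
  (made unique as a function by being undefined off the carrier).\<close>
definition AX_op :: "'a set \<Rightarrow> ('a \<Rightarrow> 'a \<Rightarrow> 'a) \<Rightarrow> ('a \<Rightarrow> int) \<Rightarrow> ('a \<Rightarrow> int) \<Rightarrow> ('a \<Rightarrow> int)" where
  "AX_op X op = (THE m. brace (free_ab X) fplus m \<and>
      (\<forall>x\<in>X. \<forall>y\<in>X. m (basis x) (basis y) = basis (op x y)) \<and>
      (\<forall>a b. (a \<notin> free_ab X \<or> b \<notin> free_ab X) \<longrightarrow> m a b = undefined))"

definition soc_AX :: "'a set \<Rightarrow> ('a \<Rightarrow> 'a \<Rightarrow> 'a) \<Rightarrow> ('a \<Rightarrow> int) set" where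
  "soc_AX X op = socle (free_ab X) (AX_op X op)"

text \<open>A(X) = A_X / Soc(A_X): carrier, addition, operation, and sigma_X.\<close>
definition AQ_carrier :: "'a set \<Rightarrow> ('a \<Rightarrow> 'a \<Rightarrow> 'a) \<Rightarrow> ('a \<Rightarrow> int) set set" where
  "AQ_carrier X op = quot_carrier (free_ab X) fplus (soc_AX X op)"

definition AQ_plus :: "'a set \<Rightarrow> ('a \<Rightarrow> 'a \<Rightarrow> 'a) \<Rightarrow> ('a \<Rightarrow> int) set \<Rightarrow> ('a \<Rightarrow> int) set \<Rightarrow> ('a \<Rightarrow> int) set" where
  "AQ_plus X op = quot_op fplus (soc_AX X op) fplus"

definition AQ_op :: "'a set \<Rightarrow> ('a \<Rightarrow> 'a \<Rightarrow> 'a) \<Rightarrow> ('a \<Rightarrow> int) set \<Rightarrow> ('a \<Rightarrow> int) set \<Rightarrow> ('a \<Rightarrow> int) set" where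
  "AQ_op X op = quot_op fplus (soc_AX X op) (AX_op X op)"

definition sigma :: "'a set \<Rightarrow> ('a \<Rightarrow> 'a \<Rightarrow> 'a) \<Rightarrow> 'a \<Rightarrow> ('a \<Rightarrow> int) set" where
  "sigma X op x = coset fplus (soc_AX X op) (basis x)"

end

theory Submission
  imports Defs "HOL-Library.Function_Algebras" "HOL-Combinatorics.Permutations"
begin

(* For y in X, the maps p |-> (p y . -) o p on
   self-maps p of X commute by the cycle-set law and are invertible by non-degeneracy, so Z^(X)
   acts on the self-maps of X. Writing pi a for the image of the identity under a, the operation
   a . b := b o (pi a)^-1 makes Z^(X) a brace extending X, and it is the only one: the laws
   a . (b + c) = a . b + a . c and (a + b) . c = (a . b) . (a . c) determine a . c by induction
   on a, once the values at -e_z are pinned down by writing z = w . w.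
   The pushforward f_* : Z^(X) -> Z^(Y) intertwines pi, hence preserves the operation; as f is
   onto, so is f_*, and f_* maps the socle into the socle. It therefore descends to a surjective
   brace morphism A(X) -> A(Y) compatible with sigma, which is unique because A(X) is additively
   generated by the image of sigma_X. *)

lemma abelian_group_on_cancel:
  assumes "abelian_group_on A pl" "u \<in> A" "v \<in> A" "w \<in> A" "pl u w = pl v w"
  shows "u = v"
proof -
  from assms(1) obtain z where z: "z \<in> A" "\<forall>a\<in>A. pl z a = a" "\<forall>a\<in>A. \<exists>b\<in>A. pl a b = z"
    and assoc: "\<forall>a\<in>A. \<forall>b\<in>A. \<forall>c\<in>A. pl (pl a b) c = pl a (pl b c)"
    and comm: "\<forall>a\<in>A. \<forall>b\<in>A. pl a b = pl b a"
    unfolding abelian_group_on_def by blast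
  obtain w' where w': "w' \<in> A" "pl w w' = z" using z(3) assms(4) by blast
  have cancel: "pl (pl a w) w' = a" if "a \<in> A" for a
  proof -
    have "pl (pl a w) w' = pl a z" using assoc that assms(4) w' by simp
    also have "\<dots> = a" using comm z that by simp
    finally show ?thesis .
  qed
  have "u = pl (pl u w) w'" using cancel assms(2) by simp
  also have "\<dots> = v" using cancel assms(3,5) by simp
  finally show ?thesis .
qed

lemma abelian_group_on_idem:
  assumes "abelian_group_on A pl" "u \<in> A" "v \<in> A" "pl u u = u" "pl v v = v"
  shows "u = v"
proof -
  from assms(1) obtain z where z: "z \<in> A" "\<forall>a\<in>A. pl z a = a"
    unfolding abelian_group_on_def by blast
  have "w = z" if "w \<in> A" "pl w w = w" for w
  proof (rule abelian_group_on_cancel[OF assms(1) that(1) z(1) that(1)])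
    show "pl w w = pl z w" using that z(2) by simp
  qed
  then have "u = z" "v = z" using assms(2-5) by blast+
  then show ?thesis by simp
qed

lemma abelian_group_on_image:
  assumes G: "abelian_group_on A pl"
    and hom: "\<And>a b. a \<in> A \<Longrightarrow> b \<in> A \<Longrightarrow> \<phi> (pl a b) = pl' (\<phi> a) (\<phi> b)"
  shows "abelian_group_on (\<phi> ` A) pl'"
proof -
  from G obtain z where z: "z \<in> A" "\<forall>a\<in>A. pl z a = a" "\<forall>a\<in>A. \<exists>b\<in>A. pl a b = z"
    and closed: "\<forall>a\<in>A. \<forall>b\<in>A. pl a b \<in> A"
    and assoc: "\<forall>a\<in>A. \<forall>b\<in>A. \<forall>c\<in>A. pl (pl a b) c = pl a (pl b c)"
    and comm: "\<forall>a\<in>A. \<forall>b\<in>A. pl a b = pl b a"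
    unfolding abelian_group_on_def by blast
  have closed': "pl' C D \<in> \<phi> ` A" if "C \<in> \<phi> ` A" "D \<in> \<phi> ` A" for C D
    using that closed by (auto simp: hom[symmetric])
  have assoc': "pl' (pl' C D) E = pl' C (pl' D E)"
    if "C \<in> \<phi> ` A" "D \<in> \<phi> ` A" "E \<in> \<phi> ` A" for C D E
    using that closed by (auto simp: hom[symmetric] assoc)
  have comm': "pl' C D = pl' D C" if "C \<in> \<phi> ` A" "D \<in> \<phi> ` A" for C D
  proof -
    from that obtain a b where "a \<in> A" "b \<in> A" "C = \<phi> a" "D = \<phi> b" by blast
    with comm show ?thesis by (simp add: hom[symmetric])
  qed
  have neutral: "pl' (\<phi> z) C = C" if "C \<in> \<phi> ` A" for C
    using that z by (auto simp: hom[symmetric])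
  have inverse: "\<exists>D\<in>\<phi> ` A. pl' C D = \<phi> z" if "C \<in> \<phi> ` A" for C
  proof -
    from that obtain a where "a \<in> A" "C = \<phi> a" by blast
    moreover obtain b where "b \<in> A" "pl a b = z" using z(3) \<open>a \<in> A\<close> by blast
    ultimately show ?thesis by (intro bexI[of _ "\<phi> b"]) (simp_all add: hom[symmetric])
  qed
  have unit: "\<exists>z'\<in>\<phi> ` A. (\<forall>C\<in>\<phi> ` A. pl' z' C = C) \<and> (\<forall>C\<in>\<phi> ` A. \<exists>D\<in>\<phi> ` A. pl' C D = z')"
    using neutral inverse z(1) by blast
  show ?thesis
    unfolding abelian_group_on_def
  proof (intro conjI)
    show "\<forall>C\<in>\<phi> ` A. \<forall>D\<in>\<phi> ` A. pl' C D \<in> \<phi> ` A" using closed' by blast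
    show "\<forall>C\<in>\<phi> ` A. \<forall>D\<in>\<phi> ` A. \<forall>E\<in>\<phi> ` A. pl' (pl' C D) E = pl' C (pl' D E)"
      using assoc' by blast
    show "\<forall>C\<in>\<phi> ` A. \<forall>D\<in>\<phi> ` A. pl' C D = pl' D C" using comm' by blast
  qed (fact unit)
qed

section \<open>The free abelian group\<close>

definition supp :: "('a \<Rightarrow> int) \<Rightarrow> 'a set" where
  "supp a = {x. a x \<noteq> 0}"

lemma supp_basis [simp]: "supp (basis x) = {x}"
  by (auto simp: supp_def basis_def)

lemma supp_add: "supp (a + b) \<subseteq> supp a \<union> supp b"
  by (auto simp: supp_def)

lemma fplus_apply: "fplus a b = a + b"
  by (simp add: fplus_def plus_fun_def)

lemma free_ab_iff: "a \<in> free_ab X \<longleftrightarrow> finite (supp a) \<and> supp a \<subseteq> X"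
  by (simp add: free_ab_def supp_def)

lemma free_ab_finite_supp: "a \<in> free_ab X \<Longrightarrow> finite (supp a)"
  by (simp add: free_ab_iff)

lemma free_ab_zero [simp]: "0 \<in> free_ab X"
  by (simp add: free_ab_def)

lemma free_ab_basis: "x \<in> X \<Longrightarrow> basis x \<in> free_ab X"
  by (simp add: free_ab_iff)

lemma free_ab_add: "a \<in> free_ab X \<Longrightarrow> b \<in> free_ab X \<Longrightarrow> a + b \<in> free_ab X"
  unfolding free_ab_iff
  by (metis (mono_tags) finite_UnI finite_subset le_sup_iff order_trans supp_add)

lemma free_ab_uminus: "a \<in> free_ab X \<Longrightarrow> - a \<in> free_ab X"
  by (simp add: free_ab_def)

lemma free_ab_diff: "a \<in> free_ab X \<Longrightarrow> b \<in> free_ab X \<Longrightarrow> a - b \<in> free_ab X"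
  using free_ab_add[of a X "- b"] free_ab_uminus[of b X] by simp

lemma free_ab_fun_upd: "a \<in> free_ab X \<Longrightarrow> x \<in> X \<Longrightarrow> a(x := n) \<in> free_ab X"
  unfolding free_ab_iff supp_def by (auto intro: finite_subset[of _ "insert x {x. a x \<noteq> 0}"])

lemma free_ab_comp_permutes:
  assumes "p permutes X" "b \<in> free_ab X"
  shows "b \<circ> p \<in> free_ab X"
proof -
  have "supp (b \<circ> p) = p -` supp b" by (auto simp: supp_def)
  moreover have "finite (p -` supp b)"
    using assms by (intro finite_vimageI) (auto simp: free_ab_iff permutes_inj)
  moreover have "p -` supp b \<subseteq> X"
  proof
    fix z assume "z \<in> p -` supp b"
    then have "p z \<in> X" using assms(2) by (auto simp: free_ab_iff)
    then show "z \<in> X" using permutes_not_in[OF assms(1)] by metis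
  qed
  ultimately show ?thesis by (simp add: free_ab_iff)
qed

lemma basis_comp_inv:
  assumes "bij p"
  shows "basis y \<circ> inv p = basis (p y)"
proof
  fix z
  have "inv p z = y \<longleftrightarrow> z = p y" using bij_inv_eq_iff[OF assms] by metis
  then show "(basis y \<circ> inv p) z = basis (p y) z" by (simp add: basis_def)
qed

lemma free_ab_coeff_induct:
  assumes plus: "\<And>a x. a \<in> free_ab X \<Longrightarrow> x \<in> X \<Longrightarrow> P a \<Longrightarrow> P (a + basis x)"
    and minus: "\<And>a x. a \<in> free_ab X \<Longrightarrow> x \<in> X \<Longrightarrow> P a \<Longrightarrow> P (a - basis x)"
    and b: "b \<in> free_ab X" "x \<in> X" "P b"
  shows "P (b(x := b x + n))"
proof (induction n rule: int_induct[where k = 0])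
  case (step1 n)
  have "b(x := b x + (n + 1)) = b(x := b x + n) + basis x"
    by (auto simp: basis_def)
  then show ?case using plus free_ab_fun_upd b step1 by metis
next
  case (step2 n)
  have "b(x := b x + (n - 1)) = b(x := b x + n) - basis x"
    by (auto simp: basis_def)
  then show ?case using minus free_ab_fun_upd b step2 by metis
qed (use b in simp)

text \<open>The \<open>induct\<close> method instantiates this rule in \<open>\<eta>\<close>-expanded form, so the simplifier would
  rewrite a case goal such as \<open>P (a + basis x)\<close> pointwise; case goals are therefore restated
  explicitly before the simplifier is applied to them.\<close>
lemma free_ab_induct [consumes 1, case_names zero plus minus]:
  assumes "a \<in> free_ab X" and "P 0"
    and plus: "\<And>a x. a \<in> free_ab X \<Longrightarrow> x \<in> X \<Longrightarrow> P a \<Longrightarrow> P (a + basis x)"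
    and minus: "\<And>a x. a \<in> free_ab X \<Longrightarrow> x \<in> X \<Longrightarrow> P a \<Longrightarrow> P (a - basis x)"
  shows "P a"
proof -
  have "\<forall>b \<in> free_ab X. supp b \<subseteq> D \<longrightarrow> P b" if "finite D" for D
    using that
  proof (induction D rule: finite_induct)
    case empty
    have "b = 0" if "supp b \<subseteq> {}" for b :: "'a \<Rightarrow> int"
      using that by (auto simp: supp_def)
    then show ?case using \<open>P 0\<close> by blast
  next
    case (insert x D)
    show ?case
    proof (intro ballI impI)
      fix b assume b: "b \<in> free_ab X" "supp b \<subseteq> insert x D"
      show "P b"
      proof (cases "x \<in> supp b")
        case True
        then have "x \<in> X" using b by (auto simp: free_ab_iff)
        have "b(x := 0) \<in> free_ab X" using b(1) \<open>x \<in> X\<close> by (rule free_ab_fun_upd)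
        moreover have "supp (b(x := 0)) \<subseteq> D" using b(2) by (auto simp: supp_def)
        ultimately have "P (b(x := 0))" using insert.IH by blast
        then show ?thesis
          using free_ab_coeff_induct[of X P "b(x := 0)" x "b x", OF plus minus]
            \<open>b(x := 0) \<in> free_ab X\<close> \<open>x \<in> X\<close> by simp
      qed (use insert b in auto)
    qed
  qed
  then show ?thesis using assms(1) by (auto simp: free_ab_iff)
qed

lemma abelian_group_free_ab: "abelian_group_on (free_ab X) fplus"
  unfolding abelian_group_on_def
proof (intro conjI)
  show "\<exists>z\<in>free_ab X. (\<forall>a\<in>free_ab X. fplus z a = a) \<and> (\<forall>a\<in>free_ab X. \<exists>b\<in>free_ab X. fplus a b = z)"
  proof (rule bexI[of _ 0], intro conjI ballI)
    show "\<exists>b\<in>free_ab X. fplus a b = 0" if "a \<in> free_ab X" for a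
      using free_ab_uminus[OF that] by (force simp: fplus_apply)
  qed (simp_all add: fplus_apply)
qed (simp_all add: fplus_apply free_ab_add ac_simps)

lemma additive_eq_on_free_ab:
  assumes G: "abelian_group_on G pl"
    and into: "\<And>a. a \<in> free_ab X \<Longrightarrow> \<phi> a \<in> G" "\<And>a. a \<in> free_ab X \<Longrightarrow> \<psi> a \<in> G"
    and additive: "\<And>a b. a \<in> free_ab X \<Longrightarrow> b \<in> free_ab X \<Longrightarrow> \<phi> (a + b) = pl (\<phi> a) (\<phi> b)"
      "\<And>a b. a \<in> free_ab X \<Longrightarrow> b \<in> free_ab X \<Longrightarrow> \<psi> (a + b) = pl (\<psi> a) (\<psi> b)"
    and basis: "\<And>x. x \<in> X \<Longrightarrow> \<phi> (basis x) = \<psi> (basis x)"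
    and a: "a \<in> free_ab X"
  shows "\<phi> a = \<psi> a"
  using a
proof (induct rule: free_ab_induct)
  case zero
  have "pl (\<phi> 0) (\<phi> 0) = \<phi> 0" "pl (\<psi> 0) (\<psi> 0) = \<psi> 0"
    using additive(1)[OF free_ab_zero free_ab_zero, symmetric]
      additive(2)[OF free_ab_zero free_ab_zero, symmetric] by simp_all
  then show ?case
    by (rule abelian_group_on_idem[OF G into(1)[OF free_ab_zero] into(2)[OF free_ab_zero]])
next
  case (plus a x)
  have "\<phi> (a + basis x) = pl (\<phi> a) (\<phi> (basis x))"
    by (rule additive(1)[OF plus(1) free_ab_basis[OF plus(2)]])
  also have "\<dots> = pl (\<psi> a) (\<psi> (basis x))"
    by (simp only: plus(3) basis[OF plus(2)])
  also have "\<dots> = \<psi> (a + basis x)"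
    by (rule additive(2)[OF plus(1) free_ab_basis[OF plus(2)], symmetric])
  finally show ?case .
next
  case (minus a x)
  have ab: "a - basis x \<in> free_ab X" "basis x \<in> free_ab X"
    using minus by (simp_all add: free_ab_diff free_ab_basis)
  have "pl (\<phi> (a - basis x)) (\<phi> (basis x)) = \<phi> a"
    using additive(1)[OF ab] by (simp only: diff_add_cancel)
  also have "\<dots> = \<psi> a" by (rule minus(3))
  also have "\<dots> = pl (\<psi> (a - basis x)) (\<phi> (basis x))"
    using additive(2)[OF ab] basis[OF minus(2)] by (simp only: diff_add_cancel)
  finally show ?case
    by (rule abelian_group_on_cancel[OF G into(1)[OF ab(1)] into(2)[OF ab(1)] into(1)[OF ab(2)]])
qed

section \<open>Actions by commuting bijections\<close>

definition int_iter :: "('s \<Rightarrow> 's) \<Rightarrow> ('s \<Rightarrow> 's) \<Rightarrow> int \<Rightarrow> 's \<Rightarrow> 's" where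
  "int_iter F G n = (if 0 \<le> n then F ^^ nat n else G ^^ nat (- n))"

lemma funpow_commute: "(\<And>s. H (F s) = F (H s)) \<Longrightarrow> H ((F ^^ n) s) = (F ^^ n) (H s)"
  by (induction n) simp_all

locale inverse_maps =
  fixes F G :: "'s \<Rightarrow> 's"
  assumes F_G [simp]: "F (G s) = s" and G_F [simp]: "G (F s) = s"
begin

lemma int_iter_0 [simp]: "int_iter F G 0 s = s"
  by (simp add: int_iter_def)

lemma int_iter_1 [simp]: "int_iter F G 1 = F"
  by (simp add: int_iter_def)

lemma int_iter_succ: "int_iter F G (n + 1) s = F (int_iter F G n s)"
proof -
  consider "0 \<le> n" | "n = -1" | "n < -1" by linarith
  then show ?thesis
  proof cases
    case 3
    then have "nat (- n) = Suc (nat (- (n + 1)))" by arith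
    then show ?thesis using 3 by (simp add: int_iter_def)
  qed (simp_all add: int_iter_def nat_add_distrib)
qed

lemma int_iter_pred: "int_iter F G (n - 1) s = G (int_iter F G n s)"
  using int_iter_succ[of "n - 1"] by (metis G_F diff_add_cancel)

lemma int_iter_add: "int_iter F G (m + n) s = int_iter F G m (int_iter F G n s)"
proof (induction m rule: int_induct[where k = 0])
  case (step1 m)
  then show ?case using int_iter_succ[of m] int_iter_succ[of "m + n"] by (simp add: ac_simps)
next
  case (step2 m)
  then show ?case using int_iter_pred[of m] int_iter_pred[of "m + n"] by (simp add: diff_add_eq)
qed simp

lemma int_iter_commute:
  assumes "\<And>s. H (F s) = F (H s)" and "\<And>s. H (G s) = G (H s)"
  shows "H (int_iter F G n s) = int_iter F G n (H s)"
  using funpow_commute[of H F, OF assms(1)] funpow_commute[of H G, OF assms(2)]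
  by (simp add: int_iter_def)

end

locale commuting_bijections =
  fixes F G :: "'i \<Rightarrow> 's \<Rightarrow> 's"
  assumes F_G: "F i (G i s) = s" and G_F: "G i (F i s) = s"
    and F_commute: "F i (F j s) = F j (F i s)"
begin

sublocale inverse_maps "F i" "G i" for i
  using F_G G_F by unfold_locales

abbreviation power :: "'i \<Rightarrow> int \<Rightarrow> 's \<Rightarrow> 's" where
  "power i n \<equiv> int_iter (F i) (G i) n"

lemma F_G_commute: "F i (G j s) = G j (F i s)"
  by (metis F_G G_F F_commute)

lemma G_commute: "G i (G j s) = G j (G i s)"
  by (metis F_G G_F F_commute)

lemma power_commute: "power i m (power j n s) = power j n (power i m s)"
proof -
  have "F i (power j n s) = power j n (F i s)" for s
    by (rule int_iter_commute) (simp_all add: F_commute F_G_commute)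
  moreover have "G i (power j n s) = power j n (G i s)" for s
    by (rule int_iter_commute) (simp_all add: F_G_commute[symmetric] G_commute)
  ultimately show ?thesis by (simp add: int_iter_commute)
qed

definition action_on :: "'i set \<Rightarrow> ('i \<Rightarrow> int) \<Rightarrow> 's \<Rightarrow> 's" where
  "action_on D a = Finite_Set.fold (\<lambda>i g. power i (a i) \<circ> g) id D"

lemma action_on_empty [simp]: "action_on {} a s = s"
  by (simp add: action_on_def)

lemma action_on_insert:
  assumes "finite D" "i \<notin> D"
  shows "action_on (insert i D) a s = power i (a i) (action_on D a s)"
proof -
  interpret comp_fun_commute_on UNIV "\<lambda>i g. power i (a i) \<circ> g"
    by unfold_locales (simp add: fun_eq_iff power_commute)
  show ?thesis using assms by (simp add: action_on_def)
qed

lemma action_on_commute: "finite D \<Longrightarrow> power i n (action_on D a s) = action_on D a (power i n s)"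
  by (induction D arbitrary: s rule: finite_induct) (simp_all add: action_on_insert power_commute)

lemma action_on_add: "finite D \<Longrightarrow> action_on D (a + b) s = action_on D b (action_on D a s)"
  by (induction D arbitrary: s rule: finite_induct)
    (simp_all add: action_on_insert action_on_commute int_iter_add power_commute)

lemma action_on_union_neutral:
  assumes "finite E" "finite D" "supp a \<subseteq> D"
  shows "action_on (D \<union> E) a s = action_on D a s"
  using assms
proof (induction E rule: finite_induct)
  case (insert i E)
  show ?case
  proof (cases "i \<in> D \<union> E")
    case True
    then show ?thesis using insert by (simp add: insert_absorb)
  next
    case False
    then have "a i = 0" using insert by (auto simp: supp_def)
    then show ?thesis using insert False by (simp add: action_on_insert)
  qed
qed simp

definition action :: "('i \<Rightarrow> int) \<Rightarrow> 's \<Rightarrow> 's" where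
  "action a = action_on (supp a) a"

lemma action_add:
  assumes "finite (supp a)" "finite (supp b)"
  shows "action (a + b) s = action b (action a s)"
proof -
  let ?D = "supp a \<union> supp b"
  have "supp (a + b) \<subseteq> ?D" by (rule supp_add)
  then have "action (a + b) s = action_on ?D (a + b) s"
    using assms action_on_union_neutral[of ?D "supp (a + b)" "a + b"]
    by (simp add: action_def Un_absorb1 finite_subset)
  also have "\<dots> = action_on ?D b (action_on ?D a s)"
    using assms by (simp add: action_on_add)
  also have "\<dots> = action b (action a s)"
    using assms action_on_union_neutral[of "supp a" "supp b" b]
      action_on_union_neutral[of "supp b" "supp a" a]
    by (simp add: action_def Un_commute)
  finally show ?thesis .
qed

lemma action_zero [simp]: "action 0 s = s"
  by (simp add: action_def supp_def)

lemma action_basis [simp]: "action (basis i) = F i"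
proof -
  have "basis i i = 1" by (simp add: basis_def)
  then show ?thesis by (simp add: fun_eq_iff action_def action_on_insert[of "{}"])
qed

lemma action_add_basis: "finite (supp a) \<Longrightarrow> action (a + basis i) s = F i (action a s)"
  by (simp add: action_add)

lemma action_diff_basis:
  assumes "finite (supp a)"
  shows "action (a - basis i) s = G i (action a s)"
proof -
  have "supp (a - basis i) \<subseteq> insert i (supp a)" by (auto simp: supp_def basis_def)
  then have "finite (supp (a - basis i))" using assms finite_subset by blast
  then have "action a s = F i (action (a - basis i) s)"
    using action_add_basis[of "a - basis i" i] by simp
  then show ?thesis by (metis G_F)
qed

end

section \<open>Braces on the free abelian group and their socle quotients\<close>

locale free_ab_brace =
  fixes X :: "'a set" and m :: "('a \<Rightarrow> int) \<Rightarrow> ('a \<Rightarrow> int) \<Rightarrow> 'a \<Rightarrow> int"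
  assumes brace: "brace (free_ab X) fplus m"
begin

lemma m_bij: "a \<in> free_ab X \<Longrightarrow> bij_betw (m a) (free_ab X) (free_ab X)"
  using brace by (simp add: brace_def cycle_set_def)

lemma m_closed: "a \<in> free_ab X \<Longrightarrow> b \<in> free_ab X \<Longrightarrow> m a b \<in> free_ab X"
  using m_bij bij_betwE by blast

lemma m_add_right:
  "a \<in> free_ab X \<Longrightarrow> b \<in> free_ab X \<Longrightarrow> c \<in> free_ab X \<Longrightarrow> m a (b + c) = m a b + m a c"
  using brace by (simp add: brace_def fplus_apply)

lemma m_add_left:
  "a \<in> free_ab X \<Longrightarrow> b \<in> free_ab X \<Longrightarrow> c \<in> free_ab X \<Longrightarrow> m (a + b) c = m (m a b) (m a c)"
  using brace by (simp add: brace_def fplus_apply)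

lemma m_zero_right: "a \<in> free_ab X \<Longrightarrow> m a 0 = 0"
  using m_add_right[of a 0 0] by simp

lemma m_uminus_right: "a \<in> free_ab X \<Longrightarrow> b \<in> free_ab X \<Longrightarrow> m a (- b) = - m a b"
  using m_add_right[of a b "- b"] m_zero_right[of a] free_ab_uminus[of b X]
  by (simp add: eq_neg_iff_add_eq_0 add.commute)

lemma m_zero_left: "c \<in> free_ab X \<Longrightarrow> m 0 c = c"
proof -
  assume c: "c \<in> free_ab X"
  have "m 0 (m 0 c) = m 0 c"
    using m_add_left[of 0 0 c] m_zero_right c by simp
  moreover have "inj_on (m 0) (free_ab X)"
    using m_bij[of 0] by (simp add: bij_betw_def)
  ultimately show ?thesis
    using c m_closed[of 0 c] by (simp add: inj_on_eq_iff)
qed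

abbreviation Soc :: "('a \<Rightarrow> int) set" where
  "Soc \<equiv> socle (free_ab X) m"

lemma socle_iff: "s \<in> Soc \<longleftrightarrow> s \<in> free_ab X \<and> (\<forall>b\<in>free_ab X. m s b = b)"
  by (simp add: socle_def)

lemma zero_in_socle: "0 \<in> Soc"
  by (simp add: socle_iff m_zero_left)

lemma socle_add: assumes "s \<in> Soc" "t \<in> Soc" shows "s + t \<in> Soc"
proof -
  have "m (s + t) b = b" if "b \<in> free_ab X" for b
    using assms that m_add_left[of s t b] by (simp add: socle_iff)
  then show ?thesis using assms by (simp add: socle_iff free_ab_add)
qed

lemma socle_uminus: assumes "s \<in> Soc" shows "- s \<in> Soc"
proof -
  have s: "s \<in> free_ab X" "- s \<in> free_ab X" using assms free_ab_uminus by (auto simp: socle_iff)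
  have "m (- s) b = b" if "b \<in> free_ab X" for b
  proof -
    have "m s (- s) = - s" "m s b = b" using assms s that by (auto simp: socle_iff)
    then show ?thesis using m_add_left[OF s that] m_zero_left[OF that] by simp
  qed
  then show ?thesis using s by (simp add: socle_iff)
qed

lemma m_add_socle:
  assumes "s \<in> Soc" "a \<in> free_ab X" "c \<in> free_ab X"
  shows "m (a + s) c = m a c"
  using assms m_add_left[of s a c] by (simp add: socle_iff add.commute)

lemma m_socle:
  assumes "s \<in> Soc" "a \<in> free_ab X"
  shows "m a s \<in> Soc"
proof -
  have s: "s \<in> free_ab X" using assms by (simp add: socle_iff)
  have "m (m a s) d = d" if "d \<in> free_ab X" for d
  proof -
    obtain c where c: "c \<in> free_ab X" "m a c = d"
      using m_bij[OF assms(2)] \<open>d \<in> free_ab X\<close> by (metis bij_betw_iff_bijections)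
    have "m (m a s) (m a c) = m (a + s) c" using m_add_left[OF assms(2) s c(1)] by simp
    also have "\<dots> = m a c" by (rule m_add_socle[OF assms c(1)])
    finally show ?thesis using c by simp
  qed
  then show ?thesis using m_closed[OF assms(2) s] by (simp add: socle_iff)
qed

abbreviation cls :: "('a \<Rightarrow> int) \<Rightarrow> ('a \<Rightarrow> int) set" where
  "cls \<equiv> coset fplus Soc"

lemma cls_eq: "cls a = (\<lambda>s. a + s) ` Soc"
  by (simp add: coset_def fplus_apply)

lemma mem_cls_self: "a \<in> cls a"
  unfolding cls_eq using zero_in_socle by force

lemma cls_eq_iff:
  assumes "a \<in> free_ab X" "b \<in> free_ab X"
  shows "cls a = cls b \<longleftrightarrow> a - b \<in> Soc"
proof
  assume "cls a = cls b"
  then obtain s where "s \<in> Soc" "a = b + s" using mem_cls_self[of a] by (auto simp: cls_eq)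
  then show "a - b \<in> Soc" by simp
next
  assume ab: "a - b \<in> Soc"
  have "cls a \<subseteq> cls b" if "a - b \<in> Soc" for a b
  proof
    fix v assume "v \<in> cls a"
    then obtain s where s: "s \<in> Soc" "v = a + s" by (auto simp: cls_eq)
    then have "v = b + ((a - b) + s)" by simp
    then show "v \<in> cls b" unfolding cls_eq using socle_add[OF that s(1)] by blast
  qed
  moreover have "b - a \<in> Soc" using socle_uminus[OF ab] by simp
  ultimately show "cls a = cls b" using ab by blast
qed

lemma cls_mem:
  assumes "a \<in> free_ab X" "v \<in> cls a"
  shows "v \<in> free_ab X" "cls v = cls a"
proof -
  obtain s where s: "s \<in> Soc" "v = a + s" using assms(2) by (auto simp: cls_eq)
  then show v: "v \<in> free_ab X" using assms(1) free_ab_add by (auto simp: socle_iff)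
  show "cls v = cls a" using s cls_eq_iff[OF v assms(1)] by simp
qed

lemma quot_op_cls:
  assumes "a \<in> free_ab X" "b \<in> free_ab X"
    and respects: "\<And>a' b'. a' \<in> free_ab X \<Longrightarrow> b' \<in> free_ab X \<Longrightarrow> cls a' = cls a \<Longrightarrow> cls b' = cls b
      \<Longrightarrow> cls (f a' b') = cls (f a b)"
  shows "quot_op fplus Soc f (cls a) (cls b) = cls (f a b)"
proof -
  define a' where "a' = (SOME v. v \<in> cls a)"
  define b' where "b' = (SOME v. v \<in> cls b)"
  have "a' \<in> cls a" "b' \<in> cls b"
    unfolding a'_def b'_def using someI[of "\<lambda>v. v \<in> cls _", OF mem_cls_self] by blast+
  then have "a' \<in> free_ab X" "b' \<in> free_ab X" "cls a' = cls a" "cls b' = cls b"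
    using cls_mem assms(1,2) by blast+
  then have "cls (f a' b') = cls (f a b)" by (rule respects)
  then show ?thesis by (simp add: quot_op_def a'_def b'_def)
qed

lemma quot_plus_cls:
  assumes "a \<in> free_ab X" "b \<in> free_ab X"
  shows "quot_op fplus Soc fplus (cls a) (cls b) = cls (a + b)"
proof -
  have "quot_op fplus Soc fplus (cls a) (cls b) = cls (fplus a b)"
  proof (rule quot_op_cls[OF assms])
    fix a' b' assume *: "a' \<in> free_ab X" "b' \<in> free_ab X" "cls a' = cls a" "cls b' = cls b"
    have "(a' - a) + (b' - b) \<in> Soc" using * assms by (simp add: cls_eq_iff socle_add)
    then show "cls (fplus a' b') = cls (fplus a b)"
      using * assms by (simp add: fplus_apply cls_eq_iff free_ab_add algebra_simps)
  qed
  then show ?thesis by (simp only: fplus_apply)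
qed

lemma quot_m_cls:
  assumes "a \<in> free_ab X" "b \<in> free_ab X"
  shows "quot_op fplus Soc m (cls a) (cls b) = cls (m a b)"
proof (rule quot_op_cls[OF assms])
  fix a' b' assume *: "a' \<in> free_ab X" "b' \<in> free_ab X" "cls a' = cls a" "cls b' = cls b"
  then have s: "a' - a \<in> Soc" "b' - b \<in> Soc" using assms by (simp_all add: cls_eq_iff)
  have "m a' b' = m a b'" using m_add_socle[OF s(1) assms(1) *(2)] by simp
  also have "\<dots> = m a b + m a (b' - b)"
    using m_add_right[OF assms, of "b' - b"] s(2) by (simp add: socle_iff)
  finally have "m a' b' - m a b \<in> Soc" using m_socle[OF s(2) assms(1)] by simp
  then show "cls (m a' b') = cls (m a b)"
    using * assms by (simp add: cls_eq_iff m_closed)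
qed

lemma abelian_group_quot:
  "abelian_group_on (quot_carrier (free_ab X) fplus Soc) (quot_op fplus Soc fplus)"
  unfolding quot_carrier_def
  by (rule abelian_group_on_image[OF abelian_group_free_ab]) (simp add: quot_plus_cls fplus_apply)

end

section \<open>The brace of a non-degenerate cycle set\<close>

locale nondeg_cycle =
  fixes X :: "'a set" and op :: "'a \<Rightarrow> 'a \<Rightarrow> 'a"
  assumes nondeg: "nondeg_cycle_set X op"
begin

lemma op_bij: "x \<in> X \<Longrightarrow> bij_betw (op x) X X"
  using nondeg by (simp add: nondeg_cycle_set_def cycle_set_def)

lemma op_closed: "x \<in> X \<Longrightarrow> y \<in> X \<Longrightarrow> op x y \<in> X"
  using op_bij bij_betwE by blast

lemma cycle_law: "x \<in> X \<Longrightarrow> y \<in> X \<Longrightarrow> z \<in> X \<Longrightarrow> op (op x y) (op x z) = op (op y x) (op y z)"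
  using nondeg by (simp add: nondeg_cycle_set_def cycle_set_def)

definition lmult :: "'a \<Rightarrow> 'a \<Rightarrow> 'a" where
  "lmult u z = (if u \<in> X \<and> z \<in> X then op u z else z)"

definition square :: "'a \<Rightarrow> 'a" where
  "square u = lmult u u"

lemma lmult_permutes: "lmult u permutes X"
proof (rule bij_imp_permutes)
  show "bij_betw (lmult u) X X"
  proof (cases "u \<in> X")
    case True
    show ?thesis using op_bij[OF True]
      by (rule bij_betw_cong[THEN iffD2, rotated]) (simp add: lmult_def True)
  next
    case False
    then show ?thesis by (simp add: lmult_def bij_betw_def inj_on_def)
  qed
qed (simp add: lmult_def)

lemma square_permutes: "square permutes X"
proof (rule bij_imp_permutes)
  have "bij_betw (\<lambda>x. op x x) X X" using nondeg by (simp add: nondeg_cycle_set_def)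
  then show "bij_betw square X X"
    by (rule bij_betw_cong[THEN iffD2, rotated]) (simp add: square_def lmult_def)
qed (simp add: square_def lmult_def)

lemma lmult_cycle: "lmult (lmult u v) (lmult u z) = lmult (lmult v u) (lmult v z)"
  by (auto simp: lmult_def op_closed cycle_law)

definition shift :: "'a \<Rightarrow> ('a \<Rightarrow> 'a) \<Rightarrow> 'a \<Rightarrow> 'a" where
  "shift y p = lmult (p y) \<circ> p"

text \<open>\<open>shift y p\<close> takes the value \<open>square (p y)\<close> at \<open>y\<close>; this is why non-degeneracy makes
  \<open>shift y\<close> invertible.\<close>
definition unshift :: "'a \<Rightarrow> ('a \<Rightarrow> 'a) \<Rightarrow> 'a \<Rightarrow> 'a" where
  "unshift y p = inv (lmult (inv square (p y))) \<circ> p"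

lemma shift_unshift: "shift y (unshift y p) = p"
proof -
  let ?w = "inv square (p y)"
  have "lmult ?w ?w = p y"
    using permutes_inverses(1)[OF square_permutes] by (simp add: square_def)
  then have "unshift y p y = ?w"
    by (simp add: unshift_def permutes_inv_eq[OF lmult_permutes])
  then show ?thesis
    by (simp add: shift_def unshift_def fun_eq_iff permutes_inverses[OF lmult_permutes])
qed

lemma unshift_shift: "unshift y (shift y p) = p"
proof -
  have "inv square (shift y p y) = p y"
    using permutes_inverses(2)[OF square_permutes] by (simp add: shift_def square_def)
  then show ?thesis
    by (simp add: shift_def unshift_def fun_eq_iff permutes_inverses[OF lmult_permutes])
qed

lemma shift_commute: "shift x (shift y p) = shift y (shift x p)"
  by (simp add: shift_def fun_eq_iff lmult_cycle[of "p y" "p x"])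

sublocale shifts: commuting_bijections shift unshift
  by unfold_locales (rule shift_unshift unshift_shift shift_commute)+

definition perm_of :: "('a \<Rightarrow> int) \<Rightarrow> 'a \<Rightarrow> 'a" where
  "perm_of a = shifts.action a id"

lemma perm_of_zero [simp]: "perm_of 0 = id"
  by (simp add: perm_of_def)

lemma perm_of_basis: "perm_of (basis x) = lmult x"
  by (simp add: perm_of_def shift_def)

lemma perm_of_add_basis: "a \<in> free_ab X \<Longrightarrow> perm_of (a + basis x) = shift x (perm_of a)"
  by (simp add: perm_of_def free_ab_finite_supp shifts.action_add_basis)

lemma perm_of_diff_basis: "a \<in> free_ab X \<Longrightarrow> perm_of (a - basis x) = unshift x (perm_of a)"
  by (simp add: perm_of_def free_ab_finite_supp shifts.action_diff_basis)

lemma perm_of_permutes: "a \<in> free_ab X \<Longrightarrow> perm_of a permutes X"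
proof (induct rule: free_ab_induct)
  case zero
  show "perm_of 0 permutes X" by simp
next
  case (plus a x)
  then show "perm_of (a + basis x) permutes X"
    unfolding perm_of_add_basis[OF plus(1)] shift_def by (intro permutes_compose lmult_permutes)
next
  case (minus a x)
  then show "perm_of (a - basis x) permutes X"
    unfolding perm_of_diff_basis[OF minus(1)] unshift_def
    by (intro permutes_compose permutes_inv lmult_permutes)
qed

lemma perm_of_closed: "a \<in> free_ab X \<Longrightarrow> y \<in> X \<Longrightarrow> perm_of a y \<in> X"
  by (simp add: permutes_in_image[OF perm_of_permutes])

lemma shift_comp: "shift y (r \<circ> p) = shift (p y) r \<circ> p"
  by (simp add: shift_def comp_assoc)

lemma unshift_comp: "unshift y (r \<circ> p) = unshift (p y) r \<circ> p"
  by (simp add: unshift_def comp_assoc)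

lemma action_comp:
  assumes p: "p permutes X" and "b \<in> free_ab X"
  shows "shifts.action b (r \<circ> p) = shifts.action (b \<circ> inv p) r \<circ> p"
  using assms(2)
proof (induct rule: free_ab_induct)
  case zero
  have "(0 :: 'a \<Rightarrow> int) \<circ> inv p = 0" by (simp add: fun_eq_iff)
  then show "shifts.action 0 (r \<circ> p) = shifts.action (0 \<circ> inv p) r \<circ> p" by simp
next
  case (plus b y)
  have b': "b \<circ> inv p \<in> free_ab X" using free_ab_comp_permutes[OF permutes_inv[OF p] plus(1)] .
  have IH: "shifts.action b (r \<circ> p) = shifts.action (b \<circ> inv p) r \<circ> p"
    using plus(3) by (simp add: comp_def)
  have "shifts.action (b + basis y) (r \<circ> p) = shift (p y) (shifts.action (b \<circ> inv p) r) \<circ> p"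
    using plus(1) by (simp add: free_ab_finite_supp shifts.action_add_basis IH shift_comp)
  also have "\<dots> = shifts.action ((b \<circ> inv p) + basis (p y)) r \<circ> p"
    using b' by (simp add: free_ab_finite_supp shifts.action_add_basis)
  also have "(b \<circ> inv p) + basis (p y) = (b + basis y) \<circ> inv p"
    using basis_comp_inv[OF permutes_bij[OF p]] by (simp add: fun_eq_iff)
  finally show "shifts.action (b + basis y) (r \<circ> p) = shifts.action ((b + basis y) \<circ> inv p) r \<circ> p" .
next
  case (minus b y)
  have b': "b \<circ> inv p \<in> free_ab X" using free_ab_comp_permutes[OF permutes_inv[OF p] minus(1)] .
  have IH: "shifts.action b (r \<circ> p) = shifts.action (b \<circ> inv p) r \<circ> p"
    using minus(3) by (simp add: comp_def)
  have "shifts.action (b - basis y) (r \<circ> p) = unshift (p y) (shifts.action (b \<circ> inv p) r) \<circ> p"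
    using minus(1) by (simp add: free_ab_finite_supp shifts.action_diff_basis IH unshift_comp)
  also have "\<dots> = shifts.action ((b \<circ> inv p) - basis (p y)) r \<circ> p"
    using b' by (simp add: free_ab_finite_supp shifts.action_diff_basis)
  also have "(b \<circ> inv p) - basis (p y) = (b - basis y) \<circ> inv p"
    using basis_comp_inv[OF permutes_bij[OF p]] by (simp add: fun_eq_iff)
  finally show "shifts.action (b - basis y) (r \<circ> p) = shifts.action ((b - basis y) \<circ> inv p) r \<circ> p" .
qed

definition brace_op :: "('a \<Rightarrow> int) \<Rightarrow> ('a \<Rightarrow> int) \<Rightarrow> 'a \<Rightarrow> int" where
  "brace_op a b = (if a \<in> free_ab X \<and> b \<in> free_ab X then b \<circ> inv (perm_of a) else undefined)"

lemma brace_op_outside: "a \<notin> free_ab X \<or> b \<notin> free_ab X \<Longrightarrow> brace_op a b = undefined"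
  by (auto simp: brace_op_def)

lemma brace_op_closed: "a \<in> free_ab X \<Longrightarrow> b \<in> free_ab X \<Longrightarrow> brace_op a b \<in> free_ab X"
  by (simp add: brace_op_def free_ab_comp_permutes permutes_inv perm_of_permutes)

lemma perm_of_add:
  assumes "a \<in> free_ab X" "b \<in> free_ab X"
  shows "perm_of (a + b) = perm_of (brace_op a b) \<circ> perm_of a"
proof -
  have "perm_of (a + b) = shifts.action b (id \<circ> perm_of a)"
    using assms by (simp add: perm_of_def free_ab_finite_supp shifts.action_add)
  also have "\<dots> = shifts.action (b \<circ> inv (perm_of a)) id \<circ> perm_of a"
    by (rule action_comp[OF perm_of_permutes[OF assms(1)] assms(2)])
  also have "\<dots> = perm_of (brace_op a b) \<circ> perm_of a"
    using assms by (simp add: perm_of_def brace_op_def)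
  finally show ?thesis .
qed

lemma brace_op_basis:
  assumes "a \<in> free_ab X" "y \<in> X"
  shows "brace_op a (basis y) = basis (perm_of a y)"
  using assms basis_comp_inv[OF permutes_bij[OF perm_of_permutes[OF assms(1)]]]
  by (simp add: brace_op_def free_ab_basis)

lemma brace_op_basis_basis: "x \<in> X \<Longrightarrow> y \<in> X \<Longrightarrow> brace_op (basis x) (basis y) = basis (op x y)"
  by (simp add: brace_op_basis free_ab_basis perm_of_basis lmult_def)

lemma brace_op_add_right:
  "a \<in> free_ab X \<Longrightarrow> b \<in> free_ab X \<Longrightarrow> c \<in> free_ab X \<Longrightarrow> brace_op a (b + c) = brace_op a b + brace_op a c"
  by (simp add: brace_op_def free_ab_add fun_eq_iff)

lemma brace_op_add_left:
  assumes "a \<in> free_ab X" "b \<in> free_ab X" "c \<in> free_ab X"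
  shows "brace_op (a + b) c = brace_op (brace_op a b) (brace_op a c)"
proof -
  have ab: "brace_op a b \<in> free_ab X" "brace_op a c \<in> free_ab X"
    using assms brace_op_closed by auto
  have "brace_op (a + b) c = c \<circ> inv (perm_of (brace_op a b) \<circ> perm_of a)"
    using assms by (simp add: brace_op_def free_ab_add perm_of_add)
  also have "\<dots> = c \<circ> inv (perm_of a) \<circ> inv (perm_of (brace_op a b))"
    using o_inv_distrib[OF permutes_bij[OF perm_of_permutes[OF ab(1)]]
        permutes_bij[OF perm_of_permutes[OF assms(1)]]]
    by (simp add: comp_assoc)
  also have "\<dots> = brace_op (brace_op a b) (brace_op a c)"
    using assms ab by (simp add: brace_op_def)
  finally show ?thesis .
qed

lemma brace_op_bij: "a \<in> free_ab X \<Longrightarrow> bij_betw (brace_op a) (free_ab X) (free_ab X)"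
proof (rule bij_betw_byWitness[where f' = "\<lambda>b. b \<circ> perm_of a"])
  assume a: "a \<in> free_ab X"
  then have p: "perm_of a permutes X" by (rule perm_of_permutes)
  show "\<forall>b\<in>free_ab X. brace_op a b \<circ> perm_of a = b"
    using a p by (simp add: brace_op_def comp_assoc permutes_inv_o)
  show "\<forall>b\<in>free_ab X. brace_op a (b \<circ> perm_of a) = b"
    using a p by (simp add: brace_op_def comp_assoc permutes_inv_o free_ab_comp_permutes)
  show "brace_op a ` free_ab X \<subseteq> free_ab X" using a brace_op_closed by auto
  show "(\<lambda>b. b \<circ> perm_of a) ` free_ab X \<subseteq> free_ab X" using p free_ab_comp_permutes by auto
qed

lemma brace_brace_op: "brace (free_ab X) fplus brace_op"
  unfolding brace_def cycle_set_def
proof (intro conjI ballI)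
  fix a b c assume abc: "a \<in> free_ab X" "b \<in> free_ab X" "c \<in> free_ab X"
  have "brace_op (brace_op a b) (brace_op a c) = brace_op (a + b) c"
    using abc by (simp add: brace_op_add_left)
  also have "\<dots> = brace_op (b + a) c" by (simp add: add.commute)
  also have "\<dots> = brace_op (brace_op b a) (brace_op b c)"
    using abc by (simp add: brace_op_add_left)
  finally show "brace_op (brace_op a b) (brace_op a c) = brace_op (brace_op b a) (brace_op b c)" .
  show "brace_op a (fplus b c) = fplus (brace_op a b) (brace_op a c)"
    using abc by (simp add: fplus_apply brace_op_add_right)
  show "brace_op (fplus a b) c = brace_op (brace_op a b) (brace_op a c)"
    using abc by (simp add: fplus_apply brace_op_add_left)
qed (simp_all add: abelian_group_free_ab brace_op_bij)

sublocale free_ab_brace X brace_op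
  by unfold_locales (rule brace_brace_op)

context
  fixes m assumes m: "free_ab_brace X m"
    and extends: "\<And>x y. x \<in> X \<Longrightarrow> y \<in> X \<Longrightarrow> m (basis x) (basis y) = basis (op x y)"
begin

interpretation m: free_ab_brace X m by (rule m)

lemma basis_eq_brace_op:
  assumes "z \<in> X" "c \<in> free_ab X"
  shows "m (basis z) c = brace_op (basis z) c"
proof (rule additive_eq_on_free_ab[OF abelian_group_free_ab _ _ _ _ _ assms(2)])
  have z: "basis z \<in> free_ab X" using assms(1) by (rule free_ab_basis)
  show "m (basis z) a \<in> free_ab X" "brace_op (basis z) a \<in> free_ab X" if "a \<in> free_ab X" for a
    using z that by (simp_all add: m.m_closed brace_op_closed)
  show "m (basis z) (a + b) = fplus (m (basis z) a) (m (basis z) b)"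
    "brace_op (basis z) (a + b) = fplus (brace_op (basis z) a) (brace_op (basis z) b)"
    if "a \<in> free_ab X" "b \<in> free_ab X" for a b
    using z that by (simp_all add: fplus_apply m.m_add_right brace_op_add_right)
  show "m (basis z) (basis y) = brace_op (basis z) (basis y)" if "y \<in> X" for y
    using assms(1) that by (simp add: extends brace_op_basis_basis)
qed

text \<open>Non-degeneracy enters here: writing \<open>z = op w w\<close>, the left action of \<open>- basis z\<close> is
  recovered from \<open>0 = basis w + - basis w\<close>.\<close>
lemma uminus_basis_eq_brace_op:
  assumes "z \<in> X" "c \<in> free_ab X"
  shows "m (- basis z) c = brace_op (- basis z) c"
proof -
  define w where "w = inv square z"
  have w: "w \<in> X" "op w w = z"
    using assms(1) permutes_inverses(1)[OF square_permutes, of z]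
    by (auto simp: w_def square_def lmult_def permutes_in_image[OF permutes_inv[OF square_permutes]]
        split: if_splits)
  have bw: "basis w \<in> free_ab X" "- basis w \<in> free_ab X"
    using w(1) by (simp_all add: free_ab_basis free_ab_uminus)
  obtain c' where c': "c' \<in> free_ab X" "brace_op (basis w) c' = c"
    using brace_op_bij[OF bw(1)] assms(2) by (metis bij_betw_iff_bijections)
  have "c' = m (basis w + - basis w) c'" using c'(1) by (simp add: m.m_zero_left)
  also have "\<dots> = m (- basis z) c"
    using m.m_add_left[OF bw c'(1)] m.m_uminus_right[OF bw(1) bw(1)] extends[OF w(1) w(1)] w(2)
      basis_eq_brace_op[OF w(1) c'(1)] c'(2) by simp
  finally have 1: "c' = m (- basis z) c" .
  have "c' = brace_op (basis w + - basis w) c'" using c'(1) by (simp add: m_zero_left)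
  also have "\<dots> = brace_op (- basis z) c"
    using brace_op_add_left[OF bw c'(1)] m_uminus_right[OF bw(1) bw(1)]
      brace_op_basis_basis[OF w(1) w(1)] w(2) c'(2) by simp
  finally show ?thesis using 1 by simp
qed

lemma brace_op_unique: "a \<in> free_ab X \<Longrightarrow> c \<in> free_ab X \<Longrightarrow> m a c = brace_op a c"
proof (induct arbitrary: c rule: free_ab_induct)
  case zero
  then show "m 0 c = brace_op 0 c" by (simp add: m.m_zero_left m_zero_left)
next
  case (plus a x)
  have x: "basis x \<in> free_ab X" using plus(2) by (rule free_ab_basis)
  have "m (a + basis x) c = m (m a (basis x)) (m a c)" by (rule m.m_add_left[OF plus(1) x plus(4)])
  also have "\<dots> = m (basis (perm_of a x)) (brace_op a c)"
    using plus x by (simp add: brace_op_basis)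
  also have "\<dots> = brace_op (basis (perm_of a x)) (brace_op a c)"
    by (rule basis_eq_brace_op[OF perm_of_closed[OF plus(1,2)] brace_op_closed[OF plus(1,4)]])
  also have "\<dots> = brace_op (a + basis x) c"
    using plus x by (simp add: brace_op_basis brace_op_add_left)
  finally show "m (a + basis x) c = brace_op (a + basis x) c" .
next
  case (minus a x)
  have x: "- basis x \<in> free_ab X" using minus(2) by (simp add: free_ab_basis free_ab_uminus)
  have "m (a - basis x) c = m (m a (- basis x)) (m a c)"
    using m.m_add_left[OF minus(1) x minus(4)] by simp
  also have "\<dots> = m (- basis (perm_of a x)) (brace_op a c)"
    using minus x by (simp add: m.m_uminus_right free_ab_basis brace_op_basis)
  also have "\<dots> = brace_op (- basis (perm_of a x)) (brace_op a c)"
    by (rule uminus_basis_eq_brace_op[OF perm_of_closed[OF minus(1,2)]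
          brace_op_closed[OF minus(1,4)]])
  also have "\<dots> = brace_op (a - basis x) c"
    using minus x brace_op_add_left[OF minus(1) x minus(4)]
    by (simp add: m_uminus_right free_ab_basis brace_op_basis)
  finally show "m (a - basis x) c = brace_op (a - basis x) c" .
qed

end

lemma AX_op_eq: "AX_op X op = brace_op"
  unfolding AX_op_def
proof (rule the_equality)
  show "brace (free_ab X) fplus brace_op
    \<and> (\<forall>x\<in>X. \<forall>y\<in>X. brace_op (basis x) (basis y) = basis (op x y))
    \<and> (\<forall>a b. a \<notin> free_ab X \<or> b \<notin> free_ab X \<longrightarrow> brace_op a b = undefined)"
    using brace_brace_op brace_op_basis_basis brace_op_outside by blast
next
  fix m assume m: "brace (free_ab X) fplus m \<and> (\<forall>x\<in>X. \<forall>y\<in>X. m (basis x) (basis y) = basis (op x y))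
    \<and> (\<forall>a b. a \<notin> free_ab X \<or> b \<notin> free_ab X \<longrightarrow> m a b = undefined)"
  then have "free_ab_brace X m" by (simp add: free_ab_brace_def)
  show "m = brace_op"
  proof (rule ext, rule ext)
    fix a b
    show "m a b = brace_op a b"
    proof (cases "a \<in> free_ab X \<and> b \<in> free_ab X")
      case True
      then show ?thesis using brace_op_unique[OF \<open>free_ab_brace X m\<close>] m by blast
    next
      case False
      then show ?thesis using m brace_op_outside by auto
    qed
  qed
qed

lemma soc_AX_eq: "soc_AX X op = Soc"
  by (simp add: soc_AX_def AX_op_eq)

lemma AQ_carrier_eq: "AQ_carrier X op = cls ` free_ab X"
  by (simp add: AQ_carrier_def quot_carrier_def soc_AX_eq)

lemma AQ_plus_cls: "a \<in> free_ab X \<Longrightarrow> b \<in> free_ab X \<Longrightarrow> AQ_plus X op (cls a) (cls b) = cls (a + b)"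
  by (simp add: AQ_plus_def soc_AX_eq quot_plus_cls)

lemma AQ_op_cls: "a \<in> free_ab X \<Longrightarrow> b \<in> free_ab X \<Longrightarrow> AQ_op X op (cls a) (cls b) = cls (brace_op a b)"
  by (simp add: AQ_op_def soc_AX_eq AX_op_eq quot_m_cls)

lemma sigma_eq: "sigma X op x = cls (basis x)"
  by (simp add: sigma_def soc_AX_eq)

lemma abelian_group_AQ: "abelian_group_on (AQ_carrier X op) (AQ_plus X op)"
  using abelian_group_quot by (simp add: AQ_carrier_def AQ_plus_def soc_AX_eq)

end

section \<open>Functoriality along surjective morphisms\<close>

definition push_forward :: "('a \<Rightarrow> 'b) \<Rightarrow> ('a \<Rightarrow> int) \<Rightarrow> 'b \<Rightarrow> int" where
  "push_forward f a y = (\<Sum>x \<in> supp a \<inter> f -` {y}. a x)"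

lemma push_forward_sum_on:
  assumes "finite D" "supp a \<subseteq> D"
  shows "push_forward f a y = (\<Sum>x \<in> D \<inter> f -` {y}. a x)"
  unfolding push_forward_def using assms
  by (intro sum.mono_neutral_left) (auto simp: supp_def)

lemma push_forward_free_ab:
  assumes "f ` X \<subseteq> Y" "a \<in> free_ab X"
  shows "push_forward f a \<in> free_ab Y"
proof -
  have "supp (push_forward f a) \<subseteq> f ` supp a"
  proof
    fix y assume "y \<in> supp (push_forward f a)"
    then have "supp a \<inter> f -` {y} \<noteq> {}"
      by (auto simp: push_forward_def supp_def[of "push_forward f a"])
    then show "y \<in> f ` supp a" by blast
  qed
  then show ?thesis
    using assms by (auto simp: free_ab_iff intro: finite_subset)
qed

lemma push_forward_add:
  assumes "finite (supp a)" "finite (supp b)"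
  shows "push_forward f (a + b) = push_forward f a + push_forward f b"
proof
  fix y
  let ?D = "supp a \<union> supp b"
  have "push_forward f (a + b) y = (\<Sum>x \<in> ?D \<inter> f -` {y}. a x + b x)"
    using assms by (subst push_forward_sum_on[of ?D]) (auto simp: supp_def)
  also have "\<dots> = push_forward f a y + push_forward f b y"
    using assms by (simp add: sum.distrib push_forward_sum_on[of ?D])
  finally show "push_forward f (a + b) y = (push_forward f a + push_forward f b) y" by simp
qed

lemma push_forward_uminus: "push_forward f (- a) = - push_forward f a"
  by (simp add: push_forward_def fun_eq_iff supp_def sum_negf)

lemma push_forward_diff:
  "finite (supp a) \<Longrightarrow> finite (supp b) \<Longrightarrow> push_forward f (a - b) = push_forward f a - push_forward f b"
  using push_forward_add[of a "- b" f] by (simp add: push_forward_uminus supp_def)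

lemma push_forward_zero [simp]: "push_forward f 0 = 0"
  by (simp add: push_forward_def fun_eq_iff supp_def)

lemma push_forward_basis [simp]: "push_forward f (basis x) = basis (f x)"
proof
  fix y
  have "supp (basis x) \<inter> f -` {y} = (if f x = y then {x} else {})" by auto
  then show "push_forward f (basis x) y = basis (f x) y"
    by (simp add: push_forward_def) (simp add: basis_def)
qed

lemma push_forward_surj:
  assumes "f ` X = Y" "c \<in> free_ab Y"
  shows "\<exists>b\<in>free_ab X. push_forward f b = c"
  using assms(2)
proof (induct rule: free_ab_induct)
  case zero
  show "\<exists>b\<in>free_ab X. push_forward f b = 0" using free_ab_zero push_forward_zero by blast
next
  case (plus c y)
  then obtain b x where "b \<in> free_ab X" "push_forward f b = c" "x \<in> X" "f x = y"
    using assms(1) by blast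
  then show "\<exists>b\<in>free_ab X. push_forward f b = c + basis y"
    by (intro bexI[of _ "b + basis x"])
      (simp_all add: push_forward_add free_ab_basis free_ab_add free_ab_finite_supp)
next
  case (minus c y)
  then obtain b x where "b \<in> free_ab X" "push_forward f b = c" "x \<in> X" "f x = y"
    using assms(1) by blast
  then show "\<exists>b\<in>free_ab X. push_forward f b = c - basis y"
    by (intro bexI[of _ "b - basis x"])
      (simp_all add: push_forward_diff free_ab_basis free_ab_diff free_ab_finite_supp)
qed

lemma permutes_intertwine_inv:
  assumes p: "p permutes X" and q: "q permutes Y"
    and f: "\<And>x. x \<in> X \<Longrightarrow> f (p x) = q (f x)" and x: "x \<in> X"
  shows "f (inv p x) = inv q (f x)"
proof -
  have "inv p x \<in> X" using x by (simp add: permutes_in_image[OF permutes_inv[OF p]])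
  then have "q (f (inv p x)) = f x" using f permutes_inverses(1)[OF p] by metis
  then show ?thesis by (metis permutes_inverses(2)[OF q])
qed

locale nondeg_cycle_surj = X: nondeg_cycle X opX + Y: nondeg_cycle Y opY
  for X :: "'a set" and opX and Y :: "'b set" and opY +
  fixes f :: "'a \<Rightarrow> 'b"
  assumes hom: "cycle_set_hom X opX Y opY f" and onto: "f ` X = Y"
begin

abbreviation push :: "('a \<Rightarrow> int) \<Rightarrow> 'b \<Rightarrow> int" where
  "push \<equiv> push_forward f"

lemma f_in: "x \<in> X \<Longrightarrow> f x \<in> Y"
  using onto by blast

lemma f_op: "x \<in> X \<Longrightarrow> y \<in> X \<Longrightarrow> f (opX x y) = opY (f x) (f y)"
  using hom by (simp add: cycle_set_hom_def)

lemma push_free_ab: "a \<in> free_ab X \<Longrightarrow> push a \<in> free_ab Y"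
  using onto by (intro push_forward_free_ab) auto

lemma lmult_hom: "u \<in> X \<Longrightarrow> z \<in> X \<Longrightarrow> f (X.lmult u z) = Y.lmult (f u) (f z)"
  by (simp add: X.lmult_def Y.lmult_def f_in f_op)

lemma square_hom: "u \<in> X \<Longrightarrow> f (X.square u) = Y.square (f u)"
  by (simp add: X.square_def Y.square_def lmult_hom)

lemma shift_intertwine:
  assumes "\<And>x. x \<in> X \<Longrightarrow> p x \<in> X" "\<And>x. x \<in> X \<Longrightarrow> f (p x) = q (f x)" "y \<in> X" "z \<in> X"
  shows "f (X.shift y p z) = Y.shift (f y) q (f z)"
  using assms by (simp add: X.shift_def Y.shift_def lmult_hom)

lemma unshift_intertwine:
  assumes "\<And>x. x \<in> X \<Longrightarrow> p x \<in> X" "\<And>x. x \<in> X \<Longrightarrow> f (p x) = q (f x)" "y \<in> X" "z \<in> X"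
  shows "f (X.unshift y p z) = Y.unshift (f y) q (f z)"
proof -
  define w where "w = inv X.square (p y)"
  have w: "w \<in> X" unfolding w_def
    using assms by (simp add: permutes_in_image[OF permutes_inv[OF X.square_permutes]])
  have "f w = inv Y.square (q (f y))"
    unfolding w_def using assms
    by (metis permutes_intertwine_inv[OF X.square_permutes Y.square_permutes] square_hom)
  moreover have "f (inv (X.lmult w) (p z)) = inv (Y.lmult (f w)) (f (p z))"
    using w assms
    by (intro permutes_intertwine_inv[OF X.lmult_permutes Y.lmult_permutes])
      (simp_all add: lmult_hom)
  ultimately show ?thesis using assms by (simp add: X.unshift_def Y.unshift_def w_def)
qed

lemma perm_of_push:
  assumes "a \<in> free_ab X"
  shows "\<forall>z\<in>X. f (X.perm_of a z) = Y.perm_of (push a) (f z)"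
  using assms
proof (induct rule: free_ab_induct)
  case zero
  show "\<forall>z\<in>X. f (X.perm_of 0 z) = Y.perm_of (push 0) (f z)" by simp
next
  case (plus a x)
  then show "\<forall>z\<in>X. f (X.perm_of (a + basis x) z) = Y.perm_of (push (a + basis x)) (f z)"
    by (simp add: X.perm_of_add_basis Y.perm_of_add_basis push_forward_add free_ab_finite_supp
        push_free_ab X.perm_of_closed shift_intertwine)
next
  case (minus a x)
  then show "\<forall>z\<in>X. f (X.perm_of (a - basis x) z) = Y.perm_of (push (a - basis x)) (f z)"
    by (simp add: X.perm_of_diff_basis Y.perm_of_diff_basis push_forward_diff free_ab_finite_supp
        push_free_ab X.perm_of_closed unshift_intertwine)
qed

lemma brace_op_push:
  assumes a: "a \<in> free_ab X" and b: "b \<in> free_ab X"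
  shows "push (X.brace_op a b) = Y.brace_op (push a) (push b)"
proof (rule additive_eq_on_free_ab[OF abelian_group_free_ab _ _ _ _ _ b])
  have pa: "push a \<in> free_ab Y" using a by (rule push_free_ab)
  show "push (X.brace_op a c) \<in> free_ab Y" "Y.brace_op (push a) (push c) \<in> free_ab Y"
    if "c \<in> free_ab X" for c
    using a pa that by (simp_all add: push_free_ab X.brace_op_closed Y.brace_op_closed)
  show "push (X.brace_op a (c + d)) = fplus (push (X.brace_op a c)) (push (X.brace_op a d))"
    "Y.brace_op (push a) (push (c + d))
       = fplus (Y.brace_op (push a) (push c)) (Y.brace_op (push a) (push d))"
    if "c \<in> free_ab X" "d \<in> free_ab X" for c d
    using a pa that push_forward_add[OF free_ab_finite_supp[OF X.brace_op_closed[OF a that(1)]]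
        free_ab_finite_supp[OF X.brace_op_closed[OF a that(2)]]]
    by (simp_all add: fplus_apply X.brace_op_add_right Y.brace_op_add_right push_forward_add
        free_ab_finite_supp push_free_ab)
  show "push (X.brace_op a (basis y)) = Y.brace_op (push a) (push (basis y))" if "y \<in> X" for y
    using a pa that perm_of_push[OF a]
    by (simp add: X.brace_op_basis Y.brace_op_basis f_in)
qed

lemma push_socle: assumes "s \<in> X.Soc" shows "push s \<in> Y.Soc"
proof -
  have s: "s \<in> free_ab X" using assms by (simp add: X.socle_iff)
  have "Y.brace_op (push s) c = c" if c: "c \<in> free_ab Y" for c
  proof -
    obtain b where b: "b \<in> free_ab X" "push b = c" using push_forward_surj[OF onto c] by blast
    have "Y.brace_op (push s) (push b) = push (X.brace_op s b)"
      by (rule brace_op_push[OF s b(1), symmetric])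
    also have "\<dots> = push b" using assms b(1) by (simp add: X.socle_iff)
    finally show ?thesis using b by simp
  qed
  then show ?thesis using push_free_ab[OF s] by (simp add: Y.socle_iff)
qed

definition A_map :: "('a \<Rightarrow> int) set \<Rightarrow> ('b \<Rightarrow> int) set" where
  "A_map C = Y.cls (push (SOME a. a \<in> C))"

lemma A_map_cls:
  assumes a: "a \<in> free_ab X"
  shows "A_map (X.cls a) = Y.cls (push a)"
proof -
  define a' where "a' = (SOME v. v \<in> X.cls a)"
  have "a' \<in> X.cls a" unfolding a'_def using someI[of "\<lambda>v. v \<in> X.cls a", OF X.mem_cls_self] .
  then have a': "a' \<in> free_ab X" "X.cls a' = X.cls a" using X.cls_mem[OF a] by blast+
  then have "push a' - push a \<in> Y.Soc"
    using push_socle a by (simp add: X.cls_eq_iff push_forward_diff[symmetric] free_ab_finite_supp)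
  then show ?thesis
    using a a' by (simp add: A_map_def a'_def[symmetric] Y.cls_eq_iff push_free_ab)
qed

lemma A_map_hom:
  "brace_hom (AQ_carrier X opX) (AQ_plus X opX) (AQ_op X opX)
             (AQ_carrier Y opY) (AQ_plus Y opY) (AQ_op Y opY) A_map"
proof -
  have "A_map (X.cls a) \<in> Y.cls ` free_ab Y" if "a \<in> free_ab X" for a
    using that by (simp add: A_map_cls push_free_ab)
  moreover have
    "A_map (AQ_plus X opX (X.cls a) (X.cls b)) = AQ_plus Y opY (A_map (X.cls a)) (A_map (X.cls b))"
    if "a \<in> free_ab X" "b \<in> free_ab X" for a b
    using that by (simp add: X.AQ_plus_cls Y.AQ_plus_cls A_map_cls free_ab_add push_free_ab
        push_forward_add free_ab_finite_supp)
  moreover have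
    "A_map (AQ_op X opX (X.cls a) (X.cls b)) = AQ_op Y opY (A_map (X.cls a)) (A_map (X.cls b))"
    if "a \<in> free_ab X" "b \<in> free_ab X" for a b
    using that
    by (simp add: X.AQ_op_cls Y.AQ_op_cls A_map_cls X.brace_op_closed push_free_ab brace_op_push)
  ultimately show ?thesis
    unfolding brace_hom_def X.AQ_carrier_eq Y.AQ_carrier_eq by blast
qed

lemma A_map_sigma: "x \<in> X \<Longrightarrow> A_map (sigma X opX x) = sigma Y opY (f x)"
  by (simp add: X.sigma_eq Y.sigma_eq A_map_cls free_ab_basis)

lemma A_map_surj: "A_map ` AQ_carrier X opX = AQ_carrier Y opY"
proof -
  have "A_map ` AQ_carrier X opX = Y.cls ` push ` free_ab X"
    unfolding X.AQ_carrier_eq image_image by (rule image_cong[OF refl A_map_cls])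
  also have "push ` free_ab X = free_ab Y"
    using push_forward_surj[OF onto] push_free_ab by blast
  finally show ?thesis unfolding Y.AQ_carrier_eq .
qed

lemma brace_hom_cls:
  assumes g: "brace_hom (AQ_carrier X opX) (AQ_plus X opX) (AQ_op X opX)
                        (AQ_carrier Y opY) (AQ_plus Y opY) (AQ_op Y opY) g"
    and "b \<in> free_ab X" "c \<in> free_ab X"
  shows "g (X.cls b) \<in> AQ_carrier Y opY"
    and "g (X.cls (b + c)) = AQ_plus Y opY (g (X.cls b)) (g (X.cls c))"
proof -
  have "X.cls b \<in> AQ_carrier X opX" "X.cls c \<in> AQ_carrier X opX"
    using assms(2,3) by (simp_all add: X.AQ_carrier_eq)
  then show "g (X.cls b) \<in> AQ_carrier Y opY"
    and "g (X.cls (b + c)) = AQ_plus Y opY (g (X.cls b)) (g (X.cls c))"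
    using g assms(2,3) by (simp_all add: brace_hom_def X.AQ_plus_cls[symmetric])
qed

lemma A_map_unique:
  assumes h: "brace_hom (AQ_carrier X opX) (AQ_plus X opX) (AQ_op X opX)
                        (AQ_carrier Y opY) (AQ_plus Y opY) (AQ_op Y opY) h"
    and h_sigma: "\<forall>x\<in>X. h (sigma X opX x) = sigma Y opY (f x)"
    and C: "C \<in> AQ_carrier X opX"
  shows "h C = A_map C"
proof -
  obtain a where a: "a \<in> free_ab X" "C = X.cls a" using C by (auto simp: X.AQ_carrier_eq)
  have "h (X.cls a) = A_map (X.cls a)"
  proof (rule additive_eq_on_free_ab[OF Y.abelian_group_AQ _ _ _ _ _ a(1)])
    show "h (X.cls b) \<in> AQ_carrier Y opY" "A_map (X.cls b) \<in> AQ_carrier Y opY"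
      if "b \<in> free_ab X" for b
      using brace_hom_cls(1)[OF h that that] brace_hom_cls(1)[OF A_map_hom that that] .
    show "h (X.cls (b + c)) = AQ_plus Y opY (h (X.cls b)) (h (X.cls c))"
      "A_map (X.cls (b + c)) = AQ_plus Y opY (A_map (X.cls b)) (A_map (X.cls c))"
      if "b \<in> free_ab X" "c \<in> free_ab X" for b c
      using brace_hom_cls(2)[OF h that] brace_hom_cls(2)[OF A_map_hom that] .
    show "h (X.cls (basis x)) = A_map (X.cls (basis x))" if "x \<in> X" for x
      using h_sigma that by (simp add: A_map_sigma X.sigma_eq[symmetric])
  qed
  then show ?thesis using a by simp
qed

end

theorem mainTheorem4:
  fixes X :: "'a set" and opX :: "'a \<Rightarrow> 'a \<Rightarrow> 'a"
    and Y :: "'b set" and opY :: "'b \<Rightarrow> 'b \<Rightarrow> 'b"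
    and f :: "'a \<Rightarrow> 'b"
  assumes "nondeg_cycle_set X opX" and "nondeg_cycle_set Y opY"
    and "cycle_set_hom X opX Y opY f" and "f ` X = Y"
  shows "\<exists>g. brace_hom (AQ_carrier X opX) (AQ_plus X opX) (AQ_op X opX)
                       (AQ_carrier Y opY) (AQ_plus Y opY) (AQ_op Y opY) g
           \<and> (\<forall>x\<in>X. g (sigma X opX x) = sigma Y opY (f x))
           \<and> g ` AQ_carrier X opX = AQ_carrier Y opY
           \<and> (\<forall>h. brace_hom (AQ_carrier X opX) (AQ_plus X opX) (AQ_op X opX)
                       (AQ_carrier Y opY) (AQ_plus Y opY) (AQ_op Y opY) h
                   \<and> (\<forall>x\<in>X. h (sigma X opX x) = sigma Y opY (f x))
                   \<longrightarrow> (\<forall>a\<in>AQ_carrier X opX. h a = g a))"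
proof -
  interpret nondeg_cycle_surj X opX Y opY f
    using assms by (simp add: nondeg_cycle_surj_def nondeg_cycle_surj_axioms_def nondeg_cycle_def)
  show ?thesis
  proof (intro exI[of _ A_map] conjI allI impI)
    show "\<forall>x\<in>X. A_map (sigma X opX x) = sigma Y opY (f x)" using A_map_sigma by blast
    show "\<forall>a\<in>AQ_carrier X opX. h a = A_map a"
      if "brace_hom (AQ_carrier X opX) (AQ_plus X opX) (AQ_op X opX)
                    (AQ_carrier Y opY) (AQ_plus Y opY) (AQ_op Y opY) h
          \<and> (\<forall>x\<in>X. h (sigma X opX x) = sigma Y opY (f x))" for h
      using that A_map_unique by blast
  qed (fact A_map_hom A_map_surj)+
qed

end
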